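(* Let $\mu$ be a Borel probability measure on a standard Borel space $X$ and let $\phi$ be a continuous unitary representation of $L^0(\mu,\mathbb T)$ on a separable complex Hilbert space. Then there is a finite Borel measure $\nu$ on $X$ such that: (i) $\nu\ll\mu$ and $\phi$ is the composition of the natural homomorphism $L^0(\mu,\mathbb T)\to L^0(\nu,\mathbb T)$ with a continuous unitary representation of $L^0(\nu,\mathbb T)$; (ii) whenever $\nu'$ is a finite Borel measure on $X$ with $\nu'\ll\mu$ such that $\phi$ is the composition of the natural homomorphism $L^0(\mu,\mathbb T)\to L^0(\nu',\mathbb T)$ with a continuous unitary representation of $L^0(\nu',\mathbb T)$, we have $\nu\ll\nu'$.
   Context: $\mathbb T$ is the unit circle in $\mathbb C$. $L^0(\mu,\mathbb T)$ is the group of $\mu$-equivalence classes of measurable functions $X\to\mathbb T$ with pointwise multiplication and the topology of convergence in measure. If $\nu\ll\mu$ are finite Borel measures, the natural homomorphism $L^0(\mu,\mathbb T)\to L^0(\nu,\mathbb T)$ sends the $\mu$-class of a Borel function to its $\nu$-class (well defined since the $\nu$-class contains the $\mu$-class). Unitary representations are strongly continuous. *)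

theory Defs
  imports "HOL-Probability.Probability"
begin

section \<open>Separable complex Hilbert spaces, modelled as l2(I) with I a subset of nat\<close>

definition l2 :: "nat set \<Rightarrow> (nat \<Rightarrow> complex) set" where
  "l2 I = {x. (\<forall>n. n \<notin> I \<longrightarrow> x n = 0) \<and> summable (\<lambda>n. (cmod (x n))\<^sup>2)}"

definition l2inner :: "(nat \<Rightarrow> complex) \<Rightarrow> (nat \<Rightarrow> complex) \<Rightarrow> complex" where
  "l2inner x y = (\<Sum>n. cnj (x n) * y n)"

definition l2norm :: "(nat \<Rightarrow> complex) \<Rightarrow> real" where
  "l2norm x = sqrt (\<Sum>n. (cmod (x n))\<^sup>2)"

definition unitary_on :: "nat set \<Rightarrow> ((nat \<Rightarrow> complex) \<Rightarrow> (nat \<Rightarrow> complex)) \<Rightarrow> bool" where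
  "unitary_on I U \<longleftrightarrow>
     bij_betw U (l2 I) (l2 I) \<and>
     (\<forall>x\<in>l2 I. \<forall>y\<in>l2 I. \<forall>a b. U (\<lambda>n. a * x n + b * y n) = (\<lambda>n. a * U x n + b * U y n)) \<and>
     (\<forall>x\<in>l2 I. \<forall>y\<in>l2 I. l2inner (U x) (U y) = l2inner x y)"

text \<open>Representatives: Borel functions X \<rightarrow> T (unit circle); classes are taken modulo M-a.e. equality.\<close>
definition Tfun :: "'a measure \<Rightarrow> ('a \<Rightarrow> complex) set" where
  "Tfun M = {f \<in> borel_measurable M. \<forall>x\<in>space M. cmod (f x) = 1}"

definition conv_in_measure :: "'a measure \<Rightarrow> (nat \<Rightarrow> 'a \<Rightarrow> complex) \<Rightarrow> ('a \<Rightarrow> complex) \<Rightarrow> bool" where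
  "conv_in_measure M fs f \<longleftrightarrow>
     (\<forall>e>0. (\<lambda>k. measure M {x\<in>space M. cmod (fs k x - f x) > e}) \<longlonglongrightarrow> 0)"

text \<open>A strongly continuous unitary representation of L^0(M,T) on l2(I), given on representatives.
  Since L^0(M,T) is metrizable for finite M, continuity is expressed sequentially.\<close>
definition cont_unitary_rep ::
  "'a measure \<Rightarrow> nat set \<Rightarrow> (('a \<Rightarrow> complex) \<Rightarrow> (nat \<Rightarrow> complex) \<Rightarrow> (nat \<Rightarrow> complex)) \<Rightarrow> bool" where
  "cont_unitary_rep M I \<phi> \<longleftrightarrow>
     (\<forall>f\<in>Tfun M. \<forall>g\<in>Tfun M. (AE x in M. f x = g x) \<longrightarrow> (\<forall>v\<in>l2 I. \<phi> f v = \<phi> g v)) \<and>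
     (\<forall>f\<in>Tfun M. unitary_on I (\<phi> f)) \<and>
     (\<forall>f\<in>Tfun M. \<forall>g\<in>Tfun M. \<forall>v\<in>l2 I. \<phi> (\<lambda>x. f x * g x) v = \<phi> f (\<phi> g v)) \<and>
     (\<forall>fs f v. (\<forall>k. fs k \<in> Tfun M) \<longrightarrow> f \<in> Tfun M \<longrightarrow> conv_in_measure M fs f \<longrightarrow> v \<in> l2 I \<longrightarrow>
        (\<lambda>k. l2norm (\<lambda>n. \<phi> (fs k) v n - \<phi> f v n)) \<longlonglongrightarrow> 0)"

definition factors_through ::
  "'a measure \<Rightarrow> 'a measure \<Rightarrow> nat set \<Rightarrow> (('a \<Rightarrow> complex) \<Rightarrow> (nat \<Rightarrow> complex) \<Rightarrow> (nat \<Rightarrow> complex)) \<Rightarrow> bool" where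
  "factors_through \<mu> \<nu> I \<phi> \<longleftrightarrow>
     (\<exists>\<psi>. cont_unitary_rep \<nu> I \<psi> \<and> (\<forall>f\<in>Tfun \<mu>. \<forall>v\<in>l2 I. \<phi> f v = \<psi> f v))"

end

theory Submission
  imports Defs
begin

text \<open>Call a Borel set \<open>A\<close> \<open>\<phi>\<close>-trivial if \<open>\<phi>\<close> is the identity on every \<open>f\<close> that equals \<open>1\<close>
  off \<open>A\<close>. These sets contain the \<open>\<mu>\<close>-null sets, are hereditary, and are closed under finite unions
  since \<open>\<phi>\<close> is multiplicative; by continuity in measure they are closed under countable unions.
  A largest one \<open>A\<^sub>0\<close> modulo \<open>\<mu>\<close>-null sets therefore exists, and \<open>\<nu>\<close> is \<open>\<mu>\<close> restricted to the
  complement of \<open>A\<^sub>0\<close>: its null sets are exactly the \<open>\<phi>\<close>-trivial sets. \<open>\<phi>\<close> factors through \<open>\<nu>\<close>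
  because it only sees functions modulo \<open>\<phi>\<close>-trivial sets, while every \<open>\<nu>'\<close> through which \<open>\<phi>\<close>
  factors has only \<open>\<phi>\<close>-trivial null sets, whence \<open>\<nu>' \<ll> \<nu>\<close>.\<close>

lemma Tfun_cong: assumes "sets M = sets N" shows "Tfun M = Tfun N"
proof -
  have "borel_measurable M = (borel_measurable N :: ('a \<Rightarrow> complex) set)"
    by (rule measurable_cong_sets[OF assms refl])
  then show ?thesis unfolding Tfun_def using sets_eq_imp_space_eq[OF assms] by simp
qed

lemma Tfun_one: "(\<lambda>x. 1) \<in> Tfun M"
  unfolding Tfun_def by auto

lemma Tfun_mult: "f \<in> Tfun M \<Longrightarrow> g \<in> Tfun M \<Longrightarrow> (\<lambda>x. f x * g x) \<in> Tfun M"
  unfolding Tfun_def by (auto simp: norm_mult)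

lemma Tfun_cnj: "f \<in> Tfun M \<Longrightarrow> (\<lambda>x. cnj (f x)) \<in> Tfun M"
  unfolding Tfun_def by (auto intro: borel_measurable_continuous_on[OF continuous_on_cnj[OF continuous_on_id]])

lemma Tfun_If: "A \<in> sets M \<Longrightarrow> f \<in> Tfun M \<Longrightarrow> g \<in> Tfun M \<Longrightarrow> (\<lambda>x. if x \<in> A then f x else g x) \<in> Tfun M"
  unfolding Tfun_def by (auto intro!: measurable_If_set)

lemma Tfun_mult_cnj: "f \<in> Tfun M \<Longrightarrow> x \<in> space M \<Longrightarrow> f x * cnj (f x) = 1"
  unfolding Tfun_def using complex_norm_square[of "f x"] by simp

lemma l2_diff_summable:
  assumes "x \<in> l2 I" "y \<in> l2 I"
  shows "summable (\<lambda>n. (cmod (x n - y n))\<^sup>2)"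
proof (rule summable_comparison_test)
  show "summable (\<lambda>n. 2 * (cmod (x n))\<^sup>2 + 2 * (cmod (y n))\<^sup>2)"
    using assms by (auto simp: l2_def intro!: summable_add summable_mult)
  have "(cmod (a - b))\<^sup>2 \<le> 2 * (cmod a)\<^sup>2 + 2 * (cmod b)\<^sup>2" for a b :: complex
  proof -
    have "(cmod (a - b))\<^sup>2 \<le> (cmod a + cmod b)\<^sup>2"
      by (simp add: norm_triangle_ineq4 power_mono)
    also have "\<dots> \<le> 2 * (cmod a)\<^sup>2 + 2 * (cmod b)\<^sup>2"
      using zero_le_power2[of "cmod a - cmod b"] by (simp add: power2_sum power2_diff)
    finally show ?thesis .
  qed
  then show "\<exists>N. \<forall>n\<ge>N. norm ((cmod (x n - y n))\<^sup>2) \<le> 2 * (cmod (x n))\<^sup>2 + 2 * (cmod (y n))\<^sup>2"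
    by simp
qed

lemma l2norm_diff_eq_0_iff:
  assumes "x \<in> l2 I" "y \<in> l2 I"
  shows "l2norm (\<lambda>n. x n - y n) = 0 \<longleftrightarrow> x = y"
  using suminf_eq_zero_iff[OF l2_diff_summable[OF assms]] by (auto simp: l2norm_def fun_eq_iff)

lemma (in finite_measure) conv_in_measure_If_incseq:
  assumes F: "incseq F" "range F \<subseteq> sets M" and f1: "\<And>x. x \<in> space M - (\<Union>k. F k) \<Longrightarrow> f x = 1"
  shows "conv_in_measure M (\<lambda>k x. if x \<in> F k then f x else 1) f"
  unfolding conv_in_measure_def
proof (intro allI impI)
  fix e :: real assume "e > 0"
  let ?R = "\<lambda>k. (\<Union>k. F k) - F k"
  have "(\<lambda>k. measure M (?R k)) \<longlonglongrightarrow> measure M (\<Inter>k. ?R k)"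
    using F by (intro finite_Lim_measure_decseq) (auto simp: decseq_def incseq_def)
  moreover have "(\<Inter>k. ?R k) = {}"
    using F(1) by (auto simp: incseq_def)
  ultimately have R_lim: "(\<lambda>k. measure M (?R k)) \<longlonglongrightarrow> 0" by simp
  have "x \<in> ?R k" if "x \<in> space M" "e < cmod ((if x \<in> F k then f x else 1) - f x)" for x k
  proof -
    have "x \<notin> F k" using that(2) \<open>e > 0\<close> by auto
    moreover from this have "f x \<noteq> 1" using that(2) \<open>e > 0\<close> by auto
    ultimately show ?thesis using f1 that(1) by blast
  qed
  then have "{x \<in> space M. e < cmod ((if x \<in> F k then f x else 1) - f x)} \<subseteq> ?R k" for k
    by blast
  then have "measure M {x \<in> space M. e < cmod ((if x \<in> F k then f x else 1) - f x)} \<le> measure M (?R k)" for k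
    using F(2) by (intro finite_measure_mono) auto
  then show "(\<lambda>k. measure M {x \<in> space M. e < cmod ((if x \<in> F k then f x else 1) - f x)}) \<longlonglongrightarrow> 0"
    by (intro tendsto_sandwich[OF _ _ tendsto_const R_lim]) auto
qed

lemma (in finite_measure) exists_maximal_mod_null_sets:
  assumes "\<A> \<subseteq> sets M" "\<A> \<noteq> {}" and UN: "\<And>A :: nat \<Rightarrow> 'a set. range A \<subseteq> \<A> \<Longrightarrow> (\<Union>i. A i) \<in> \<A>"
  shows "\<exists>A\<^sub>0\<in>\<A>. \<forall>B\<in>\<A>. B - A\<^sub>0 \<in> null_sets M"
proof -
  define s where "s = (SUP A\<in>\<A>. measure M A)"
  have bdd: "bdd_above (measure M ` \<A>)"
    using bounded_measure by (auto intro!: bdd_aboveI)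
  have "\<exists>A\<in>\<A>. s - 1 / Suc n < measure M A" for n :: nat
    using less_cSUP_iff[OF assms(2) bdd, of "s - 1 / Suc n"] by (simp add: s_def)
  then obtain A where A: "\<And>n. A n \<in> \<A>" and A_large: "\<And>n. s - 1 / Suc n < measure M (A n)"
    by metis
  define A\<^sub>0 where "A\<^sub>0 = (\<Union>n. A n)"
  have A\<^sub>0: "A\<^sub>0 \<in> \<A>" unfolding A\<^sub>0_def using A by (intro UN) auto
  have "s \<le> measure M A\<^sub>0"
  proof (rule field_le_epsilon)
    fix e :: real assume "0 < e"
    then obtain n where "1 / Suc n < e" using nat_approx_posE by blast
    moreover have "measure M (A n) \<le> measure M A\<^sub>0"
      using A\<^sub>0 assms(1) by (intro finite_measure_mono) (auto simp: A\<^sub>0_def)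
    ultimately show "s \<le> measure M A\<^sub>0 + e" using A_large[of n] by linarith
  qed
  moreover have "B - A\<^sub>0 \<in> null_sets M" if B: "B \<in> \<A>" for B
  proof -
    have "A\<^sub>0 \<union> B \<in> \<A>"
      unfolding Un_range_binary using A\<^sub>0 B by (intro UN) (simp add: range_binary_eq)
    then have "measure M (A\<^sub>0 \<union> B) \<le> s" unfolding s_def using bdd by (rule cSUP_upper)
    moreover have "measure M (A\<^sub>0 \<union> B) = measure M A\<^sub>0 + measure M (B - A\<^sub>0)"
      using A\<^sub>0 B assms(1) finite_measure_Union[of A\<^sub>0 "B - A\<^sub>0"] by auto
    ultimately have "measure M (B - A\<^sub>0) = 0"
      using \<open>s \<le> measure M A\<^sub>0\<close> measure_nonneg[of M "B - A\<^sub>0"] by linarith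
    then show ?thesis using A\<^sub>0 B assms(1) by (auto simp: null_sets_def emeasure_eq_measure)
  qed
  ultimately show ?thesis using A\<^sub>0 by blast
qed

lemma null_sets_restrict_iff:
  assumes "A \<in> sets M"
  shows "B \<in> null_sets (density M (indicator (space M - A))) \<longleftrightarrow> B \<in> sets M \<and> B - A \<in> null_sets M"
proof -
  have "emeasure (density M (indicator (space M - A))) B = emeasure M (B - A)" if "B \<in> sets M"
  proof -
    have "(space M - A) \<inter> B = B - A" using sets.sets_into_space[OF that] by auto
    then show ?thesis using emeasure_restricted[of "space M - A" M B] assms that by auto
  qed
  then show ?thesis using assms by (auto simp: null_sets_def)
qed

lemma conv_in_measure_restrict:
  assumes A: "A \<in> sets M" and [measurable]: "f \<in> borel_measurable M" "\<And>k. fs k \<in> borel_measurable M"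
    and conv: "conv_in_measure (density M (indicator (space M - A))) fs f"
  shows "conv_in_measure M (\<lambda>k x. if x \<in> A then f x else fs k x) f"
  unfolding conv_in_measure_def
proof (intro allI impI)
  fix e :: real assume "e > 0"
  have "measure M {x \<in> space M. e < cmod ((if x \<in> A then f x else fs k x) - f x)} =
      measure (density M (indicator (space M - A))) {x \<in> space M. e < cmod (fs k x - f x)}" for k
  proof -
    have "{x \<in> space M. e < cmod ((if x \<in> A then f x else fs k x) - f x)} =
        (space M - A) \<inter> {x \<in> space M. e < cmod (fs k x - f x)}"
      using \<open>e > 0\<close> by auto
    moreover have "{x \<in> space M. e < cmod (fs k x - f x)} \<in> sets M" by measurable
    ultimately show ?thesis using A by (simp add: measure_restricted)
  qed
  then show "(\<lambda>k. measure M {x \<in> space M. e < cmod ((if x \<in> A then f x else fs k x) - f x)}) \<longlonglongrightarrow> 0"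
    using conv \<open>e > 0\<close> unfolding conv_in_measure_def by simp
qed

definition rep_trivial_on ::
  "'a measure \<Rightarrow> nat set \<Rightarrow> (('a \<Rightarrow> complex) \<Rightarrow> (nat \<Rightarrow> complex) \<Rightarrow> (nat \<Rightarrow> complex)) \<Rightarrow> 'a set \<Rightarrow> bool"
  where "rep_trivial_on M I \<phi> A \<longleftrightarrow> A \<in> sets M \<and>
    (\<forall>f\<in>Tfun M. (\<forall>x\<in>space M - A. f x = 1) \<longrightarrow> (\<forall>v\<in>l2 I. \<phi> f v = v))"

lemma rep_trivial_on_sets: "rep_trivial_on M I \<phi> A \<Longrightarrow> A \<in> sets M"
  unfolding rep_trivial_on_def by blast

lemma rep_trivial_onD:
  "rep_trivial_on M I \<phi> A \<Longrightarrow> f \<in> Tfun M \<Longrightarrow> (\<And>x. x \<in> space M - A \<Longrightarrow> f x = 1) \<Longrightarrow> v \<in> l2 I \<Longrightarrow> \<phi> f v = v"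
  unfolding rep_trivial_on_def by blast

lemma rep_trivial_on_subset:
  "rep_trivial_on M I \<phi> A \<Longrightarrow> B \<subseteq> A \<Longrightarrow> B \<in> sets M \<Longrightarrow> rep_trivial_on M I \<phi> B"
  unfolding rep_trivial_on_def by blast

context
  fixes M :: "'a measure" and I :: "nat set"
    and \<phi> :: "('a \<Rightarrow> complex) \<Rightarrow> (nat \<Rightarrow> complex) \<Rightarrow> (nat \<Rightarrow> complex)"
  assumes rep: "cont_unitary_rep M I \<phi>"
begin

lemma rep_ae_cong: "f \<in> Tfun M \<Longrightarrow> g \<in> Tfun M \<Longrightarrow> (AE x in M. f x = g x) \<Longrightarrow> v \<in> l2 I \<Longrightarrow> \<phi> f v = \<phi> g v"
  using rep unfolding cont_unitary_rep_def by blast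

lemma rep_unitary: "f \<in> Tfun M \<Longrightarrow> unitary_on I (\<phi> f)"
  using rep unfolding cont_unitary_rep_def by blast

lemma rep_mult: "f \<in> Tfun M \<Longrightarrow> g \<in> Tfun M \<Longrightarrow> v \<in> l2 I \<Longrightarrow> \<phi> (\<lambda>x. f x * g x) v = \<phi> f (\<phi> g v)"
  using rep unfolding cont_unitary_rep_def by blast

lemma rep_continuous:
  "(\<And>k. fs k \<in> Tfun M) \<Longrightarrow> f \<in> Tfun M \<Longrightarrow> conv_in_measure M fs f \<Longrightarrow> v \<in> l2 I \<Longrightarrow>
    (\<lambda>k. l2norm (\<lambda>n. \<phi> (fs k) v n - \<phi> f v n)) \<longlonglongrightarrow> 0"
  using rep unfolding cont_unitary_rep_def by blast

lemma rep_in_l2: assumes "f \<in> Tfun M" "v \<in> l2 I" shows "\<phi> f v \<in> l2 I"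
proof -
  have "bij_betw (\<phi> f) (l2 I) (l2 I)" using rep_unitary[OF assms(1)] unfolding unitary_on_def by blast
  then show ?thesis using assms(2) by (rule bij_betw_apply)
qed

lemma rep_one: assumes "v \<in> l2 I" shows "\<phi> (\<lambda>x. 1) v = v"
proof -
  have "inj_on (\<phi> (\<lambda>x. 1)) (l2 I)"
    using rep_unitary[OF Tfun_one] by (simp add: unitary_on_def bij_betw_def)
  moreover have "\<phi> (\<lambda>x. 1) (\<phi> (\<lambda>x. 1) v) = \<phi> (\<lambda>x. 1) v"
    using rep_mult[OF Tfun_one Tfun_one assms] by simp
  ultimately show ?thesis
    using rep_in_l2[OF Tfun_one assms] assms inj_onD by metis
qed

lemma rep_trivial_on_null_set: assumes "A \<in> null_sets M" shows "rep_trivial_on M I \<phi> A"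
  unfolding rep_trivial_on_def
proof (intro conjI ballI impI)
  fix f v assume f: "f \<in> Tfun M" and "\<forall>x\<in>space M - A. f x = 1" and v: "v \<in> l2 I"
  then have "AE x in M. f x = 1"
    by (intro AE_I'[OF assms]) auto
  then show "\<phi> f v = v"
    using rep_ae_cong[OF f Tfun_one _ v] rep_one[OF v] by simp
qed (use assms in auto)

lemma rep_trivial_on_Un:
  assumes A: "rep_trivial_on M I \<phi> A" and B: "rep_trivial_on M I \<phi> B"
  shows "rep_trivial_on M I \<phi> (A \<union> B)"
  unfolding rep_trivial_on_def
proof (intro conjI ballI impI)
  have A_sets: "A \<in> sets M" using A by (rule rep_trivial_on_sets)
  then show "A \<union> B \<in> sets M" using B by (auto dest: rep_trivial_on_sets)
  fix f v assume f: "f \<in> Tfun M" and f1: "\<forall>x\<in>space M - (A \<union> B). f x = 1" and v: "v \<in> l2 I"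
  define g where "g x = (if x \<in> A then f x else 1)" for x
  define h where "h x = (if x \<in> A then 1 else f x)" for x
  have g: "g \<in> Tfun M" and h: "h \<in> Tfun M"
    unfolding g_def h_def by (intro Tfun_If A_sets f Tfun_one)+
  have "(\<lambda>x. g x * h x) = f" by (auto simp: g_def h_def)
  then have "\<phi> f v = \<phi> (\<lambda>x. g x * h x) v" by simp
  also have "\<dots> = \<phi> g (\<phi> h v)" by (rule rep_mult[OF g h v])
  also have "\<phi> h v = v" by (rule rep_trivial_onD[OF B h _ v]) (use f1 in \<open>auto simp: h_def\<close>)
  also have "\<phi> g v = v" by (rule rep_trivial_onD[OF A g _ v]) (auto simp: g_def)
  finally show "\<phi> f v = v" .
qed

lemma rep_trivial_on_UN_lessThan:
  "(\<And>i. rep_trivial_on M I \<phi> (A i)) \<Longrightarrow> rep_trivial_on M I \<phi> (\<Union>i<(k::nat). A i)"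
  by (induction k) (auto simp: lessThan_Suc rep_trivial_on_null_set rep_trivial_on_Un)

lemma rep_trivial_on_cong:
  assumes D: "rep_trivial_on M I \<phi> D" and f: "f \<in> Tfun M" and g: "g \<in> Tfun M"
    and fg: "\<And>x. x \<in> space M - D \<Longrightarrow> f x = g x" and v: "v \<in> l2 I"
  shows "\<phi> f v = \<phi> g v"
proof -
  define h where "h x = f x * cnj (g x)" for x
  have h: "h \<in> Tfun M" unfolding h_def by (intro Tfun_mult Tfun_cnj f g)
  have "h x * g x = f x" if "x \<in> space M" for x
    using Tfun_mult_cnj[OF g that] by (simp add: h_def mult.assoc mult.commute[of "cnj (g x)"])
  then have "AE x in M. f x = h x * g x" by auto
  then have "\<phi> f v = \<phi> (\<lambda>x. h x * g x) v" by (rule rep_ae_cong[OF f Tfun_mult[OF h g] _ v])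
  also have "\<dots> = \<phi> h (\<phi> g v)" by (rule rep_mult[OF h g v])
  also have "\<dots> = \<phi> g v"
    by (rule rep_trivial_onD[OF D h _ rep_in_l2[OF g v]]) (use fg Tfun_mult_cnj[OF g] in \<open>auto simp: h_def\<close>)
  finally show ?thesis .
qed

lemma rep_trivial_on_countable_UN:
  assumes "finite_measure M" and A: "\<And>i::nat. rep_trivial_on M I \<phi> (A i)"
  shows "rep_trivial_on M I \<phi> (\<Union>i. A i)"
  unfolding rep_trivial_on_def
proof (intro conjI ballI impI)
  interpret finite_measure M by fact
  show "(\<Union>i. A i) \<in> sets M" using A by (auto intro: rep_trivial_on_sets)
  fix f v assume f: "f \<in> Tfun M" and f1: "\<forall>x\<in>space M - (\<Union>i. A i). f x = 1" and v: "v \<in> l2 I"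
  define F where "F k = (\<Union>i<k. A i)" for k
  define fs where "fs k x = (if x \<in> F k then f x else 1)" for k x
  have F_sets: "range F \<subseteq> sets M" unfolding F_def using A by (auto intro: rep_trivial_on_sets)
  have fs: "fs k \<in> Tfun M" for k
    unfolding fs_def using F_sets by (intro Tfun_If f Tfun_one) auto
  have "incseq F" unfolding incseq_def F_def by (meson UN_mono lessThan_subset_iff order_refl)
  moreover have "(\<Union>k. F k) = (\<Union>i. A i)" by (auto simp: F_def)
  ultimately have "conv_in_measure M fs f" unfolding fs_def
    using f1 F_sets by (intro conv_in_measure_If_incseq) auto
  then have "(\<lambda>k. l2norm (\<lambda>n. \<phi> (fs k) v n - \<phi> f v n)) \<longlonglongrightarrow> 0" by (rule rep_continuous[OF fs f _ v])
  moreover have "\<phi> (fs k) v = v" for k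
    by (rule rep_trivial_onD[OF rep_trivial_on_UN_lessThan[OF A] fs _ v]) (auto simp: fs_def F_def)
  ultimately have "l2norm (\<lambda>n. v n - \<phi> f v n) = 0" by (simp add: LIMSEQ_const_iff)
  then show "\<phi> f v = v" using l2norm_diff_eq_0_iff[OF v rep_in_l2[OF f v]] by simp
qed

lemma rep_ae_cong_null_sets_trivial:
  assumes N: "sets N = sets M" "null_sets N \<subseteq> Collect (rep_trivial_on M I \<phi>)"
    and f: "f \<in> Tfun M" and g: "g \<in> Tfun M" and fg: "AE x in N. f x = g x" and v: "v \<in> l2 I"
  shows "\<phi> f v = \<phi> g v"
proof -
  have [measurable]: "f \<in> borel_measurable N" "g \<in> borel_measurable N"
    using f g Tfun_cong[OF N(1)] by (auto simp: Tfun_def)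
  let ?D = "{x \<in> space N. \<not> f x = g x}"
  have "?D \<in> null_sets N" using fg by (subst AE_iff_null[symmetric]) measurable
  then have "rep_trivial_on M I \<phi> ?D" using N(2) by blast
  then show ?thesis by (rule rep_trivial_on_cong[OF _ f g _ v]) (auto simp: sets_eq_imp_space_eq[OF N(1)])
qed

lemma rep_trivial_on_restrict_null_sets:
  assumes A: "rep_trivial_on M I \<phi> A"
  shows "null_sets (density M (indicator (space M - A))) \<subseteq> Collect (rep_trivial_on M I \<phi>)"
proof
  fix B assume "B \<in> null_sets (density M (indicator (space M - A)))"
  then have B: "B \<in> sets M" "B - A \<in> null_sets M"
    using null_sets_restrict_iff[OF rep_trivial_on_sets[OF A]] by auto
  have "rep_trivial_on M I \<phi> ((B - A) \<union> A)" by (intro rep_trivial_on_Un rep_trivial_on_null_set B A)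
  then show "B \<in> Collect (rep_trivial_on M I \<phi>)" using B by (auto intro: rep_trivial_on_subset)
qed

lemma cont_unitary_rep_restrict:
  assumes A: "rep_trivial_on M I \<phi> A"
  shows "cont_unitary_rep (density M (indicator (space M - A))) I \<phi>"
  unfolding cont_unitary_rep_def Tfun_cong[OF sets_density]
proof (intro conjI ballI allI impI)
  show "\<phi> f v = \<phi> g v"
    if "f \<in> Tfun M" "g \<in> Tfun M" "AE x in density M (indicator (space M - A)). f x = g x" "v \<in> l2 I" for f g v
    using that rep_trivial_on_restrict_null_sets[OF A] by (intro rep_ae_cong_null_sets_trivial) auto
  show "unitary_on I (\<phi> f)" if "f \<in> Tfun M" for f by (rule rep_unitary[OF that])
  show "\<phi> (\<lambda>x. f x * g x) v = \<phi> f (\<phi> g v)" if "f \<in> Tfun M" "g \<in> Tfun M" "v \<in> l2 I" for f g v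
    by (rule rep_mult[OF that])
  fix fs f v assume fs: "\<forall>k. fs k \<in> Tfun M" and f: "f \<in> Tfun M" and v: "v \<in> l2 I"
    and conv: "conv_in_measure (density M (indicator (space M - A))) fs f"
  define gs where "gs k x = (if x \<in> A then f x else fs k x)" for k x
  have gs: "gs k \<in> Tfun M" for k
    unfolding gs_def using fs by (intro Tfun_If rep_trivial_on_sets[OF A] f) auto
  have "\<phi> (gs k) v = \<phi> (fs k) v" for k
    by (rule rep_trivial_on_cong[OF A gs _ _ v]) (use fs in \<open>auto simp: gs_def\<close>)
  moreover have "conv_in_measure M gs f"
    unfolding gs_def using f fs conv rep_trivial_on_sets[OF A]
    by (intro conv_in_measure_restrict) (auto simp: Tfun_def)
  ultimately show "(\<lambda>k. l2norm (\<lambda>n. \<phi> (fs k) v n - \<phi> f v n)) \<longlonglongrightarrow> 0"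
    using rep_continuous[OF gs f _ v] by simp
qed

lemma exists_maximal_rep_trivial_on:
  assumes "finite_measure M"
  shows "\<exists>A\<^sub>0. rep_trivial_on M I \<phi> A\<^sub>0 \<and> (\<forall>B. rep_trivial_on M I \<phi> B \<longrightarrow> B - A\<^sub>0 \<in> null_sets M)"
proof -
  interpret finite_measure M by fact
  let ?\<A> = "Collect (rep_trivial_on M I \<phi>)"
  have "?\<A> \<subseteq> sets M" using rep_trivial_on_sets by blast
  moreover have "?\<A> \<noteq> {}" using rep_trivial_on_null_set[of "{}"] by auto
  moreover have "(\<Union>i. A i) \<in> ?\<A>" if "range A \<subseteq> ?\<A>" for A :: "nat \<Rightarrow> 'a set"
    using that rep_trivial_on_countable_UN[OF assms, of A] by auto
  ultimately have "\<exists>A\<^sub>0\<in>?\<A>. \<forall>B\<in>?\<A>. B - A\<^sub>0 \<in> null_sets M" by (rule exists_maximal_mod_null_sets)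
  then show ?thesis by blast
qed

lemma null_sets_restrict_maximal:
  assumes A\<^sub>0: "rep_trivial_on M I \<phi> A\<^sub>0" and maximal: "\<And>B. rep_trivial_on M I \<phi> B \<Longrightarrow> B - A\<^sub>0 \<in> null_sets M"
  shows "null_sets (density M (indicator (space M - A\<^sub>0))) = Collect (rep_trivial_on M I \<phi>)"
proof
  show "null_sets (density M (indicator (space M - A\<^sub>0))) \<subseteq> Collect (rep_trivial_on M I \<phi>)"
    by (rule rep_trivial_on_restrict_null_sets[OF A\<^sub>0])
  show "Collect (rep_trivial_on M I \<phi>) \<subseteq> null_sets (density M (indicator (space M - A\<^sub>0)))"
  proof
    fix B assume "B \<in> Collect (rep_trivial_on M I \<phi>)"
    then show "B \<in> null_sets (density M (indicator (space M - A\<^sub>0)))"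
      unfolding null_sets_restrict_iff[OF rep_trivial_on_sets[OF A\<^sub>0]] using maximal rep_trivial_on_sets by simp
  qed
qed

end

lemma factors_through_null_sets:
  assumes rep: "cont_unitary_rep M I \<phi>" and N: "sets N = sets M" "factors_through M N I \<phi>"
  shows "null_sets N \<subseteq> Collect (rep_trivial_on M I \<phi>)"
proof
  obtain \<psi> where \<psi>: "cont_unitary_rep N I \<psi>" and \<phi>\<psi>: "\<And>f v. f \<in> Tfun M \<Longrightarrow> v \<in> l2 I \<Longrightarrow> \<phi> f v = \<psi> f v"
    using N(2) unfolding factors_through_def by blast
  fix B assume B: "B \<in> null_sets N"
  show "B \<in> Collect (rep_trivial_on M I \<phi>)"
    unfolding mem_Collect_eq rep_trivial_on_def
  proof (intro conjI ballI impI)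
    fix f v assume f: "f \<in> Tfun M" and "\<forall>x\<in>space M - B. f x = 1" and v: "v \<in> l2 I"
    then have "AE x in N. f x = 1"
      by (intro AE_I'[OF B]) (auto simp: sets_eq_imp_space_eq[OF N(1)])
    then have "\<psi> f v = \<psi> (\<lambda>x. 1) v"
      using f Tfun_cong[OF N(1)] by (intro rep_ae_cong[OF \<psi> _ Tfun_one _ v]) auto
    then show "\<phi> f v = v"
      using \<phi>\<psi>[OF f v] \<phi>\<psi>[OF Tfun_one v] rep_one[OF rep v] by simp
  qed (use B N(1) in auto)
qed

theorem mainTheorem2:
  fixes \<mu> :: "'a::polish_space measure" and I :: "nat set"
    and \<phi> :: "('a \<Rightarrow> complex) \<Rightarrow> (nat \<Rightarrow> complex) \<Rightarrow> (nat \<Rightarrow> complex)"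
  assumes "sets \<mu> = sets borel" and "prob_space \<mu>" and "cont_unitary_rep \<mu> I \<phi>"
  shows "\<exists>\<nu>. sets \<nu> = sets borel \<and> finite_measure \<nu> \<and> absolutely_continuous \<mu> \<nu> \<and>
             factors_through \<mu> \<nu> I \<phi> \<and>
             (\<forall>\<nu>'. sets \<nu>' = sets borel \<and> finite_measure \<nu>' \<and> absolutely_continuous \<mu> \<nu>' \<and>
                    factors_through \<mu> \<nu>' I \<phi> \<longrightarrow> absolutely_continuous \<nu>' \<nu>)"
proof -
  note rep = assms(3)
  have fin: "finite_measure \<mu>" using assms(2) by (simp add: prob_space_def)
  then obtain A\<^sub>0 where A\<^sub>0: "rep_trivial_on \<mu> I \<phi> A\<^sub>0"
    and maximal: "\<And>B. rep_trivial_on \<mu> I \<phi> B \<Longrightarrow> B - A\<^sub>0 \<in> null_sets \<mu>"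
    using exists_maximal_rep_trivial_on[OF rep] by blast
  have A\<^sub>0_sets: "A\<^sub>0 \<in> sets \<mu>" using A\<^sub>0 by (rule rep_trivial_on_sets)
  define \<nu> where "\<nu> = density \<mu> (indicator (space \<mu> - A\<^sub>0))"
  have "null_sets \<nu> = Collect (rep_trivial_on \<mu> I \<phi>)"
    unfolding \<nu>_def by (rule null_sets_restrict_maximal[OF rep A\<^sub>0 maximal])
  then have "null_sets \<nu>' \<subseteq> null_sets \<nu>" if "sets \<nu>' = sets borel" "factors_through \<mu> \<nu>' I \<phi>" for \<nu>'
    using factors_through_null_sets[OF rep] that assms(1) by simp
  moreover have "sets \<nu> = sets borel" using assms(1) by (simp add: \<nu>_def)
  moreover have "finite_measure \<nu>"
    unfolding \<nu>_def using A\<^sub>0_sets by (intro finite_measure.finite_measure_restricted[OF fin]) auto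
  moreover have "absolutely_continuous \<mu> \<nu>"
    unfolding \<nu>_def using A\<^sub>0_sets by (intro absolutely_continuousI_density borel_measurable_indicator) auto
  moreover have "factors_through \<mu> \<nu> I \<phi>"
    unfolding factors_through_def \<nu>_def using cont_unitary_rep_restrict[OF rep A\<^sub>0] by blast
  ultimately show ?thesis unfolding absolutely_continuous_def by blast
qed

end
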